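(* There exists an invertible $18\times18$ binary matrix such that the corresponding linear kernel has partial distance sequence $(1,2,2,2,2,2,4,4,4,4,6,6,8,8,8,8,8,16)$. Consequently $E_{18}\ge\frac1{18}\sum_{i=0}^{17}\log_{18}D_{min}^{(i)}\approx0.49521$.
   Context: A kernel of dimension $\ell$ is a bijection $g:\{0,1\}^\ell\to\{0,1\}^\ell$; a linear kernel is $g({\bf u})={\bf u}G$ over $\mathbb{F}_2$ for an invertible $\ell\times\ell$ binary matrix $G$. ${\bf a}\bullet{\bf b}$ denotes concatenation, $d_H$ Hamming distance. Partial distances: $D_{min}^{(i)}=\min\{d_H(g({\bf w}\bullet 0\bullet{\bf u}),g({\bf w}\bullet 1\bullet {\bf v})) : {\bf w}\in\{0,1\}^i,\ {\bf u},{\bf v}\in\{0,1\}^{\ell-i-1}\}$, $i=0,\dots,\ell-1$; exponent $E(g)=\frac1\ell\sum_{i}\log_\ell D_{min}^{(i)}$; $E_\ell=\max_g E(g)$ over all kernels of dimension $\ell$. *)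

theory Defs
  imports "HOL-Library.Z2" "Jordan_Normal_Form.Matrix"
begin

definition hamming :: "bit vec \<Rightarrow> bit vec \<Rightarrow> nat" where
  "hamming a b = card {i. i < dim_vec a \<and> a $ i \<noteq> b $ i}"

definition is_kernel :: "nat \<Rightarrow> (bit vec \<Rightarrow> bit vec) \<Rightarrow> bool" where
  "is_kernel l g \<longleftrightarrow> bij_betw g (carrier_vec l) (carrier_vec l)"

text \<open>Linear kernel u |-> u G (row vector times matrix), computed as G^T times u.\<close>
definition lin_kernel :: "bit mat \<Rightarrow> bit vec \<Rightarrow> bit vec" where
  "lin_kernel G u = transpose_mat G *\<^sub>v u"

definition partial_dist :: "nat \<Rightarrow> (bit vec \<Rightarrow> bit vec) \<Rightarrow> nat \<Rightarrow> nat" where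
  "partial_dist l g i = Min {hamming (g (vec_of_list (w @ 0 # u))) (g (vec_of_list (w @ 1 # v))) | w u v.
      length w = i \<and> length u = l - i - 1 \<and> length v = l - i - 1}"

definition kernel_exponent :: "nat \<Rightarrow> (bit vec \<Rightarrow> bit vec) \<Rightarrow> real" where
  "kernel_exponent l g = (1 / real l) * (\<Sum>i<l. log (real l) (real (partial_dist l g i)))"

definition opt_exponent :: "nat \<Rightarrow> real" where
  "opt_exponent l = Max {kernel_exponent l g | g. is_kernel l g}"

end

theory Submission
  imports Defs
begin

(* Write G for the 18 x 18 binary matrix with rows r_0, ..., r_17, so that the linear
   kernel maps u to u G = sum_j u_j r_j.  For inputs w.0.u and w.1.v the difference of the two
   images is r_i + sum_t (u_t + v_t) r_(i+1+t); hence the i-th partial distance is the minimum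
   Hamming weight of the coset r_i + span(r_(i+1), ..., r_17).  For the concrete matrix the row r_i itself attains the claimed value,
   and the matching lower bounds come from three sources:
     - every coset weight is nonzero, because the kernel is injective (an explicit inverse
       matrix is checked), which settles i = 0;
     - all rows but the first have even weight, so for 1 <= i <= 5 every coset weight is even
       and nonzero, hence at least 2;
     - for 6 <= i <= 17 the cosets have at most 2^11 elements and are enumerated exhaustively.
   Finally, the kernels of dimension l form a finite set, so opt_exponent l bounds the exponent
   of every kernel, and the exponent (34 ln 2 + 2 ln 3) / (18 ln 18) of the profile is located
   to within 5e-6 by comparing powers of 2 and 3. *)

section \<open>Binary vectors as Boolean lists\<close>

text \<open>For computation, binary vectors are Boolean lists; exclusive or is vector addition
  over GF(2).\<close>

definition weight :: "bool list \<Rightarrow> nat" where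
  "weight xs = length (filter id xs)"

definition xor_list :: "bool list \<Rightarrow> bool list \<Rightarrow> bool list" where
  "xor_list a b = map2 (\<noteq>) a b"

text \<open>\<open>lincomb a rs cs\<close> is the vector \<open>a + \<Sum>\<^sub>t cs!t \<cdot> rs!t\<close>, an element of the coset
  \<open>a + span rs\<close>.\<close>

fun lincomb :: "bool list \<Rightarrow> bool list list \<Rightarrow> bool list \<Rightarrow> bool list" where
  "lincomb a (r # rs) (c # cs) = lincomb (if c then xor_list a r else a) rs cs"
| "lincomb a _ _ = a"

fun coset_min_weight :: "bool list \<Rightarrow> bool list list \<Rightarrow> nat" where
  "coset_min_weight a [] = weight a"
| "coset_min_weight a (r # rs) = min (coset_min_weight a rs) (coset_min_weight (xor_list a r) rs)"

lemma length_lincomb: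
  "\<forall>r\<in>set rs. length r = length a \<Longrightarrow> length (lincomb a rs cs) = length a"
  by (induction a rs cs rule: lincomb.induct) (auto simp: xor_list_def)

lemma lincomb_replicate_False: "lincomb a rs (replicate n False) = a"
proof (induction n arbitrary: rs)
  case (Suc n)
  then show ?case by (cases rs) auto
qed simp

lemma of_bool_neq_bit: "(of_bool (x \<noteq> y) :: bit) = of_bool x + of_bool y"
  by (cases x; cases y) auto

lemma lincomb_nth:
  assumes "length cs = length rs" "\<forall>r\<in>set rs. length r = length a" "k < length a"
  shows "(of_bool (lincomb a rs cs ! k) :: bit)
           = of_bool (a ! k) + (\<Sum>t<length rs. of_bool (cs ! t) * of_bool (rs ! t ! k))"
  using assms
proof (induction rs arbitrary: a cs)
  case Nil
  then show ?case by simp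
next
  case (Cons r rs)
  then obtain c cs' where cs: "cs = c # cs'" by (cases cs) auto
  let ?a = "if c then xor_list a r else a"
  have "length ?a = length a" using Cons.prems by (auto simp: xor_list_def)
  then have "(of_bool (lincomb a (r # rs) cs ! k) :: bit)
      = of_bool (?a ! k) + (\<Sum>t<length rs. of_bool (cs' ! t) * of_bool (rs ! t ! k))"
    using Cons.IH[of cs' ?a] Cons.prems cs by simp
  also have "of_bool (?a ! k) = (of_bool (a ! k) :: bit) + of_bool c * of_bool (r ! k)"
    using Cons.prems by (auto simp: xor_list_def of_bool_neq_bit)
  finally show ?case using cs
    by (simp only: length_Cons sum.lessThan_Suc_shift nth_Cons_0 nth_Cons_Suc add.assoc)
qed

lemma coset_min_weight_le:
  "length cs = length rs \<Longrightarrow> coset_min_weight a rs \<le> weight (lincomb a rs cs)"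
proof (induction rs arbitrary: a cs)
  case (Cons r rs)
  then obtain c cs' where "cs = c # cs'" by (cases cs) auto
  with Cons show ?case by (cases c) (auto simp: min_le_iff_disj)
qed simp

lemma even_weight_xor:
  "length a = length r \<Longrightarrow> even (weight (xor_list a r)) \<longleftrightarrow> (even (weight a) \<longleftrightarrow> even (weight r))"
  by (induction a r rule: list_induct2) (auto simp: weight_def xor_list_def)

text \<open>Even-weight vectors form a subspace, so a coset of even-weight vectors is even.\<close>

lemma even_weight_lincomb:
  "even (weight a) \<Longrightarrow> \<forall>r\<in>set rs. even (weight r) \<and> length r = length a
    \<Longrightarrow> even (weight (lincomb a rs cs))"
proof (induction a rs cs rule: lincomb.induct)
  case (1 a r rs c cs)
  have "length (if c then xor_list a r else a) = length a" by (auto simp: xor_list_def 1(3))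
  then show ?case using 1 even_weight_xor by (auto simp: xor_list_def)
qed auto

section \<open>Linear kernels given by their rows\<close>

definition row_matrix :: "nat \<Rightarrow> bool list list \<Rightarrow> bit mat" where
  "row_matrix l R = mat l l (\<lambda>(j, k). of_bool (R ! j ! k))"

definition square_rows :: "nat \<Rightarrow> bool list list \<Rightarrow> bool" where
  "square_rows l R \<longleftrightarrow> length R = l \<and> (\<forall>r\<in>set R. length r = l)"

definition identity_rows :: "nat \<Rightarrow> bool list list" where
  "identity_rows l = map (\<lambda>i. map (\<lambda>j. j = i) [0..<l]) [0..<l]"

lemma row_matrix_carrier: "row_matrix l R \<in> carrier_mat l l"
  by (simp add: row_matrix_def)

text \<open>A matrix product certified row by row: row \<open>i\<close> of \<open>P Q\<close> is the combination of the rows of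
  \<open>Q\<close> with coefficients \<open>P ! i\<close>.\<close>

lemma row_matrix_mult_eq_one:
  assumes P: "square_rows l P" and Q: "square_rows l Q"
    and prod: "map (lincomb (replicate l False) Q) P = identity_rows l"
  shows "row_matrix l P * row_matrix l Q = 1\<^sub>m l"
proof (rule eq_matI)
  fix i k assume "i < dim_row (1\<^sub>m l :: bit mat)" "k < dim_col (1\<^sub>m l :: bit mat)"
  then have i: "i < l" and k: "k < l" by auto
  have Pi: "length (P ! i) = length Q" using P Q i by (auto simp: square_rows_def)
  have "(row_matrix l P * row_matrix l Q) $$ (i, k)
      = (\<Sum>t<length Q. (of_bool (P ! i ! t) :: bit) * of_bool (Q ! t ! k))"
    using i k Q by (simp add: row_matrix_def scalar_prod_def atLeast0LessThan square_rows_def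
        del: mult_bit_eq_and add_bit_eq_xor)
  also have "\<dots> = of_bool (lincomb (replicate l False) Q (P ! i) ! k)"
    using lincomb_nth[of "P ! i" Q "replicate l False" k] Q Pi k by (simp add: square_rows_def)
  also have "lincomb (replicate l False) Q (P ! i) = map (\<lambda>j. j = i) [0..<l]"
    using arg_cong[OF prod, of "\<lambda>xs. xs ! i"] i P by (simp add: identity_rows_def square_rows_def)
  finally show "(row_matrix l P * row_matrix l Q) $$ (i, k) = 1\<^sub>m l $$ (i, k)"
    using i k by auto
qed (auto simp: row_matrix_def)

lemma lin_kernel_inverse:
  assumes "A \<in> carrier_mat n n" "B \<in> carrier_mat n n" "A * B = 1\<^sub>m n" "v \<in> carrier_vec n"
  shows "lin_kernel B (lin_kernel A v) = v"
proof -
  have "lin_kernel B (lin_kernel A v) = (transpose_mat B * transpose_mat A) *\<^sub>v v"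
    unfolding lin_kernel_def using assms by (subst assoc_mult_mat_vec) auto
  also have "transpose_mat B * transpose_mat A = transpose_mat (A * B)"
    using assms by (intro transpose_mult[symmetric]) auto
  finally show ?thesis using assms by simp
qed

lemma dim_lin_kernel_row_matrix: "dim_vec (lin_kernel (row_matrix l R) v) = l"
  by (simp add: lin_kernel_def row_matrix_def)

lemma lin_kernel_row_matrix_nth:
  "length xs = l \<Longrightarrow> k < l \<Longrightarrow>
   lin_kernel (row_matrix l R) (vec_of_list xs) $ k = (\<Sum>j<l. xs ! j * of_bool (R ! j ! k))"
  by (simp add: lin_kernel_def row_matrix_def scalar_prod_def atLeast0LessThan vec_of_list_index
      mult.commute del: mult_bit_eq_and add_bit_eq_xor)

lemma sum_unit_prefix:
  "(\<Sum>j<length (replicate i 0 @ 1 # d). (replicate i 0 @ (1::bit) # d) ! j * M j)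
     = M i + (\<Sum>t<length d. d ! t * M (Suc i + t))"
proof (induction i arbitrary: M)
  case 0
  show ?case by (simp only: replicate_0 append_Nil length_Cons sum.lessThan_Suc_shift nth_Cons_0
      nth_Cons_Suc mult_1_left plus_nat.add_0 add_Suc)
next
  case (Suc i)
  have "(\<Sum>j<length (replicate (Suc i) 0 @ 1 # d). (replicate (Suc i) 0 @ (1::bit) # d) ! j * M j)
     = (\<Sum>j<length (replicate i 0 @ 1 # d). (replicate i 0 @ (1::bit) # d) ! j * M (Suc j))"
    by (simp only: replicate_Suc append_Cons length_Cons sum.lessThan_Suc_shift nth_Cons_0
      nth_Cons_Suc mult_zero_left add_0_left)
  also have "\<dots> = M (Suc i) + (\<Sum>t<length d. d ! t * M (Suc (Suc i + t)))"
    using Suc.IH[of "\<lambda>j. M (Suc j)"] by (simp only: add_Suc_right add_Suc)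
  finally show ?case by (simp only: add_Suc_right add_Suc)
qed

lemma bit_neq_iff_sum: "(a::bit) + b = c \<Longrightarrow> (a \<noteq> b) = (c \<noteq> 0)"
  by (cases a; cases b) (auto simp del: add_bit_eq_xor)

lemma map2_add_self: "map2 (+) w w = replicate (length w) (0::bit)"
  by (induction w) auto

lemma of_bool_eq_one: "(of_bool (b = 1) :: bit) = b"
  by (cases b) auto

lemma to_bits_of_bits:
  "length cs = n \<Longrightarrow> map (\<lambda>b. b = 1) (map2 (+) (replicate n (0::bit)) (map of_bool cs)) = cs"
  by (induction cs arbitrary: n) (auto simp: Suc_length_conv simp del: add_bit_eq_xor)

lemma lin_kernel_row_matrix_sum:
  assumes R: "square_rows l R" and i: "i < l" and k: "k < l"
    and lx: "length x = l" and ly: "length y = l"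
    and xy: "map2 (+) x y = replicate i 0 @ 1 # d" and ld: "length d = l - Suc i"
  shows "lin_kernel (row_matrix l R) (vec_of_list x) $ k + lin_kernel (row_matrix l R) (vec_of_list y) $ k
       = of_bool (lincomb (R ! i) (drop (Suc i) R) (map (\<lambda>b. b = 1) d) ! k)"
proof -
  have Ri: "length (R ! i) = l" and lR: "length R = l"
    using R i by (auto simp: square_rows_def)
  have rs: "\<forall>r\<in>set (drop (Suc i) R). length r = length (R ! i)"
    using R Ri by (auto simp: square_rows_def dest: in_set_dropD)
  have "lin_kernel (row_matrix l R) (vec_of_list x) $ k + lin_kernel (row_matrix l R) (vec_of_list y) $ k
      = (\<Sum>j<l. (x ! j + y ! j) * of_bool (R ! j ! k))"
    unfolding lin_kernel_row_matrix_nth[OF lx k] lin_kernel_row_matrix_nth[OF ly k]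
    by (simp only: sum.distrib[symmetric] distrib_right)
  also have "\<dots> = (\<Sum>j<length (replicate i 0 @ 1 # d). (replicate i 0 @ 1 # d) ! j * of_bool (R ! j ! k))"
  proof -
    have "length (replicate i 0 @ (1::bit) # d) = l" using ld i by simp
    moreover have "x ! j + y ! j = (replicate i 0 @ 1 # d) ! j" if "j < l" for j
      using that lx ly by (simp only: xy[symmetric]) simp
    ultimately show ?thesis by (intro sum.cong) auto
  qed
  also have "\<dots> = of_bool (R ! i ! k) + (\<Sum>t<length d. d ! t * of_bool (R ! (Suc i + t) ! k))"
    by (rule sum_unit_prefix)
  also have "\<dots> = of_bool (R ! i ! k) + (\<Sum>t<length (drop (Suc i) R).
      of_bool (map (\<lambda>b. b = 1) d ! t) * of_bool (drop (Suc i) R ! t ! k))"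
    using ld lR by (intro arg_cong2[where f="(+)"] sum.cong)
      (auto simp: of_bool_eq_one simp del: mult_bit_eq_and add_bit_eq_xor)
  also have "\<dots> = of_bool (lincomb (R ! i) (drop (Suc i) R) (map (\<lambda>b. b = 1) d) ! k)"
    using lincomb_nth[OF _ rs, of "map (\<lambda>b. b = 1) d" k] ld lR Ri k
    by (simp del: mult_bit_eq_and add_bit_eq_xor)
  finally show ?thesis .
qed

lemma hamming_lin_kernel_row_matrix:
  assumes R: "square_rows l R" and i: "i < l"
    and lw: "length w = i" and lu: "length u = l - Suc i" and lv: "length v = l - Suc i"
  shows "hamming (lin_kernel (row_matrix l R) (vec_of_list (w @ 0 # u)))
                 (lin_kernel (row_matrix l R) (vec_of_list (w @ 1 # v)))
       = weight (lincomb (R ! i) (drop (Suc i) R) (map (\<lambda>b. b = 1) (map2 (+) u v)))"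
proof -
  define g where "g = lin_kernel (row_matrix l R)"
  define x where "x = w @ 0 # u"
  define y where "y = w @ (1::bit) # v"
  define L where "L = lincomb (R ! i) (drop (Suc i) R) (map (\<lambda>b. b = 1) (map2 (+) u v))"
  have lx: "length x = l" and ly: "length y = l" using lw lu lv i by (auto simp: x_def y_def)
  have xy: "map2 (+) x y = replicate i 0 @ 1 # map2 (+) u v"
    using lw lu lv by (simp add: x_def y_def zip_append map2_add_self del: add_bit_eq_xor)
  have lL: "length L = l"
    using R i length_lincomb[of "drop (Suc i) R" "R ! i"]
    by (auto simp: L_def square_rows_def dest: in_set_dropD)
  have "(g (vec_of_list x) $ k \<noteq> g (vec_of_list y) $ k) = L ! k" if k: "k < l" for k
  proof -
    have "g (vec_of_list x) $ k + g (vec_of_list y) $ k = of_bool (L ! k)"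
      unfolding g_def L_def by (rule lin_kernel_row_matrix_sum[OF R i k lx ly xy]) (simp add: lu lv)
    then show ?thesis using bit_neq_iff_sum by (cases "L ! k") simp_all
  qed
  then have "hamming (g (vec_of_list x)) (g (vec_of_list y)) = card {k. k < length L \<and> L ! k}"
    unfolding hamming_def g_def dim_lin_kernel_row_matrix lL by metis
  also have "\<dots> = weight L" by (simp add: weight_def length_filter_conv_card)
  finally show ?thesis by (simp add: g_def x_def y_def L_def)
qed

section \<open>Partial distances as minimum coset weights\<close>

definition partial_dist_set :: "nat \<Rightarrow> (bit vec \<Rightarrow> bit vec) \<Rightarrow> nat \<Rightarrow> nat set" where
  "partial_dist_set l g i = {hamming (g (vec_of_list (w @ 0 # u))) (g (vec_of_list (w @ 1 # v))) | w u v.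
      length w = i \<and> length u = l - i - 1 \<and> length v = l - i - 1}"

lemma partial_dist_Min: "partial_dist l g i = Min (partial_dist_set l g i)"
  by (simp add: partial_dist_def partial_dist_set_def)

definition coset_weights :: "bool list list \<Rightarrow> nat \<Rightarrow> nat set" where
  "coset_weights R i = {weight (lincomb (R ! i) (drop (Suc i) R) cs) | cs. length cs = length R - Suc i}"

lemma partial_dist_set_row_matrix:
  assumes R: "square_rows l R" and i: "i < l"
  shows "partial_dist_set l (lin_kernel (row_matrix l R)) i = coset_weights R i"
proof -
  have lR: "length R = l" using R by (simp add: square_rows_def)
  let ?g = "lin_kernel (row_matrix l R)"
  show ?thesis
  proof (intro equalityI subsetI)
    fix n assume "n \<in> partial_dist_set l ?g i"
    then obtain w u v where n: "n = hamming (?g (vec_of_list (w @ 0 # u))) (?g (vec_of_list (w @ 1 # v)))"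
      and l: "length w = i" "length u = l - Suc i" "length v = l - Suc i"
      by (auto simp: partial_dist_set_def)
    show "n \<in> coset_weights R i"
      unfolding n hamming_lin_kernel_row_matrix[OF R i l] coset_weights_def using l lR by auto
  next
    fix n assume "n \<in> coset_weights R i"
    then obtain cs where n: "n = weight (lincomb (R ! i) (drop (Suc i) R) cs)"
      and cs: "length cs = l - Suc i"
      using lR by (auto simp: coset_weights_def)
    have "n = hamming (?g (vec_of_list (replicate i 0 @ 0 # replicate (l - Suc i) 0)))
                      (?g (vec_of_list (replicate i 0 @ 1 # map of_bool cs)))"
      using hamming_lin_kernel_row_matrix[OF R i, of "replicate i 0" "replicate (l - Suc i) 0"
          "map of_bool cs"] to_bits_of_bits[OF cs] cs n by simp
    then show "n \<in> partial_dist_set l ?g i"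
      unfolding partial_dist_set_def using cs by fastforce
  qed
qed

lemma weight_row_in_coset_weights: "weight (R ! i) \<in> coset_weights R i"
  unfolding coset_weights_def
  by (intro CollectI exI[of _ "replicate (length R - Suc i) False"]) (simp add: lincomb_replicate_False)

lemma finite_coset_weights: "finite (coset_weights R i)"
proof -
  have "coset_weights R i = (\<lambda>cs. weight (lincomb (R ! i) (drop (Suc i) R) cs)) `
      {cs. set cs \<subseteq> UNIV \<and> length cs = length R - Suc i}"
    by (auto simp: coset_weights_def)
  then show ?thesis using finite_lists_length_eq[of "UNIV :: bool set"] by simp
qed

lemma hamming_eq_0_iff: "dim_vec a = dim_vec b \<Longrightarrow> hamming a b = 0 \<longleftrightarrow> a = b"
  by (auto simp: hamming_def card_eq_0_iff eq_vecI)

text \<open>An injective kernel separates the two inputs, which differ in position \<open>i\<close>; so no partial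
  distance of an injective kernel vanishes.\<close>

lemma zero_notin_partial_dist_set:
  assumes inj: "inj_on g (carrier_vec l)" and dim: "\<And>x. dim_vec (g x) = m" and i: "i < l"
  shows "0 \<notin> partial_dist_set l g i"
proof
  assume "0 \<in> partial_dist_set l g i"
  then obtain w u v where eq0: "hamming (g (vec_of_list (w @ 0 # u))) (g (vec_of_list (w @ 1 # v))) = 0"
    and l: "length w = i" "length u = l - i - 1" "length v = l - i - 1"
    by (auto simp: partial_dist_set_def)
  have "g (vec_of_list (w @ 0 # u)) = g (vec_of_list (w @ 1 # v))"
    using eq0 dim hamming_eq_0_iff by metis
  moreover have "vec_of_list (w @ 0 # u) \<in> carrier_vec l" "vec_of_list (w @ 1 # v) \<in> carrier_vec l"
    using l i by (auto intro!: carrier_vecI)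
  ultimately have "vec_of_list (w @ 0 # u) = vec_of_list (w @ (1::bit) # v)"
    using inj by (auto dest: inj_onD)
  then have "w @ 0 # u = w @ (1::bit) # v" by (metis list_vec)
  then show False by simp
qed

section \<open>The optimal exponent bounds every kernel\<close>

lemma finite_carrier_vec_bit: "finite (carrier_vec n :: bit vec set)"
proof -
  have "carrier_vec n \<subseteq> vec_of_list ` {xs. set xs \<subseteq> (UNIV :: bit set) \<and> length xs = n}"
  proof
    fix v :: "bit vec" assume "v \<in> carrier_vec n"
    then show "v \<in> vec_of_list ` {xs. set xs \<subseteq> UNIV \<and> length xs = n}"
      by (intro image_eqI[of _ _ "list_of_vec v"]) (auto simp: vec_list)
  qed
  moreover have "finite (UNIV :: bit set)"
    by (rule finite_subset[of _ "{0, 1}"]) (auto intro: bit.exhaust)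
  ultimately show ?thesis by (metis finite_lists_length_eq finite_surj)
qed

lemma kernel_exponent_restrict:
  "kernel_exponent l g = kernel_exponent l (restrict g (carrier_vec l))"
proof -
  have "partial_dist_set l g i = partial_dist_set l (restrict g (carrier_vec l)) i" if "i < l" for i
  proof -
    have "restrict g (carrier_vec l) (vec_of_list (w @ b # u)) = g (vec_of_list (w @ b # u))"
      if "length w = i" "length u = l - i - 1" for w u and b :: bit
      using that \<open>i < l\<close> by (auto intro: carrier_vecI)
    then show ?thesis unfolding partial_dist_set_def by (intro Collect_cong) metis
  qed
  then show ?thesis by (simp add: kernel_exponent_def partial_dist_Min)
qed

text \<open>Up to restriction there are finitely many kernels, so the maximum defining
  \<open>opt_exponent l\<close> exists and dominates every kernel.\<close>

lemma kernel_exponent_le_opt_exponent: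
  assumes "is_kernel l g"
  shows "kernel_exponent l g \<le> opt_exponent l"
proof -
  let ?E = "{kernel_exponent l g | g. is_kernel l g}"
  have "?E \<subseteq> kernel_exponent l ` (\<Pi>\<^sub>E x \<in> carrier_vec l. carrier_vec l)"
  proof
    fix e assume "e \<in> ?E"
    then obtain g where e: "e = kernel_exponent l g" and g: "is_kernel l g" by auto
    have "restrict g (carrier_vec l) \<in> (\<Pi>\<^sub>E x \<in> carrier_vec l. carrier_vec l)"
      using g unfolding is_kernel_def by (auto dest: bij_betwE)
    then show "e \<in> kernel_exponent l ` (\<Pi>\<^sub>E x \<in> carrier_vec l. carrier_vec l)"
      unfolding e by (subst kernel_exponent_restrict) (rule imageI)
  qed
  moreover have "finite (kernel_exponent l ` (\<Pi>\<^sub>E x \<in> carrier_vec l. carrier_vec l))"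
    by (intro finite_imageI finite_PiE finite_carrier_vec_bit)
  ultimately have "finite ?E" by (rule finite_subset)
  then show ?thesis unfolding opt_exponent_def using assms by (auto intro: Max_ge)
qed

lemma ln_less_of_power_less:
  assumes "(x::real) ^ m < y ^ n" "0 < x" "0 < y"
  shows "m * ln x < n * ln y"
proof -
  have "ln (x ^ m) < ln (y ^ n)"
    using assms by (simp only: ln_less_cancel_iff zero_less_power)
  then show ?thesis using assms by (simp only: ln_realpow)
qed

section \<open>An 18 \<times> 18 kernel with exponent about 0.49521\<close>

definition bits :: "nat list \<Rightarrow> bool list" where
  "bits = map (\<lambda>d. d = 1)"

definition kernel_rows :: "bool list list" where
  "kernel_rows = map bits [
    [1,0,0,0,0,0,0,0,0,0,0,0,0,0,0,0,0,0],
    [1,0,0,0,0,0,0,1,0,0,0,0,0,0,0,0,0,0],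
    [1,0,0,0,1,0,0,0,0,0,0,0,0,0,0,0,0,0],
    [1,0,0,1,0,0,0,0,0,0,0,0,0,0,0,0,0,0],
    [1,0,1,0,0,0,0,0,0,0,0,0,0,0,0,0,0,0],
    [1,1,0,0,0,0,0,0,0,0,0,0,0,0,0,0,0,0],
    [0,0,0,1,1,0,1,0,0,0,0,0,0,0,0,0,1,0],
    [0,1,1,0,0,0,0,0,0,0,0,0,1,1,0,0,0,0],
    [0,0,1,1,0,0,0,0,0,1,0,0,0,0,0,0,0,1],
    [0,0,0,0,0,1,0,1,1,0,0,0,0,0,0,0,1,0],
    [1,1,0,0,0,0,0,1,0,0,0,0,0,1,1,0,1,0],
    [1,0,0,1,1,0,1,0,1,0,0,1,0,0,0,0,0,0],
    [0,0,0,1,1,1,0,0,0,1,1,0,1,1,0,0,1,0],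
    [0,0,0,1,0,1,0,1,0,1,1,1,0,0,1,1,0,0],
    [1,1,0,0,0,1,0,0,1,0,1,0,0,1,0,0,1,1],
    [0,0,1,0,1,1,0,0,1,0,1,1,0,1,1,0,0,0],
    [0,0,0,0,1,1,1,0,1,1,0,1,1,0,0,1,0,0],
    [0,0,1,1,1,1,1,1,1,1,1,1,1,1,1,1,1,1]]"

text \<open>The rows of the inverse matrix, a certificate that the kernel is a bijection.\<close>

definition inverse_rows :: "bool list list" where
  "inverse_rows = map bits [
    [1,0,0,0,0,0,0,0,0,0,0,0,0,0,0,0,0,0],
    [1,0,0,0,0,1,0,0,0,0,0,0,0,0,0,0,0,0],
    [1,0,0,0,1,0,0,0,0,0,0,0,0,0,0,0,0,0],
    [1,0,0,1,0,0,0,0,0,0,0,0,0,0,0,0,0,0],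
    [1,0,1,0,0,0,0,0,0,0,0,0,0,0,0,0,0,0],
    [1,0,0,1,1,1,0,0,1,1,1,1,1,1,0,1,0,1],
    [1,0,0,1,0,1,1,1,0,1,0,1,0,1,0,1,1,0],
    [1,1,0,0,0,0,0,0,0,0,0,0,0,0,0,0,0,0],
    [1,1,1,1,1,0,0,1,1,1,1,0,1,0,0,0,1,1],
    [1,1,1,1,0,1,1,0,0,1,1,0,1,1,0,0,1,0],
    [1,1,1,1,0,0,1,0,1,1,0,0,1,1,0,0,0,1],
    [1,1,0,1,1,1,1,0,1,0,1,0,1,1,0,1,0,1],
    [1,1,0,1,0,1,0,1,0,1,1,0,0,0,1,0,1,1],
    [1,1,0,1,1,0,0,0,0,1,1,0,0,0,1,0,1,1],
    [1,0,1,1,1,0,0,1,0,0,0,1,0,1,1,1,0,1],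
    [1,0,1,0,1,1,1,1,1,1,1,0,0,0,1,1,1,0],
    [1,0,1,0,0,1,0,1,0,1,0,1,0,1,0,1,1,0],
    [1,1,1,0,1,1,1,0,1,1,1,0,1,1,0,0,1,0]]"

definition profile :: "nat list" where
  "profile = [1,2,2,2,2,2,4,4,4,4,6,6,8,8,8,8,8,16]"

abbreviation G18 :: "bit mat" where "G18 \<equiv> row_matrix 18 kernel_rows"
abbreviation G18_inv :: "bit mat" where "G18_inv \<equiv> row_matrix 18 inverse_rows"

lemma square_kernel_rows: "square_rows 18 kernel_rows"
  by code_simp

lemma square_inverse_rows: "square_rows 18 inverse_rows"
  by code_simp

lemma kernel_inverse_rows: "map (lincomb (replicate 18 False) inverse_rows) kernel_rows = identity_rows 18"
  by code_simp

lemma inverse_kernel_rows: "map (lincomb (replicate 18 False) kernel_rows) inverse_rows = identity_rows 18"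
  by code_simp

lemma weight_kernel_rows: "map weight kernel_rows = profile"
  by code_simp

lemma even_weight_kernel_rows: "\<forall>r\<in>set (tl kernel_rows). even (weight r)"
  by code_simp

lemma coset_min_weight_kernel_rows:
  "\<forall>i\<in>set [6..<18]. coset_min_weight (kernel_rows ! i) (drop (Suc i) kernel_rows) = profile ! i"
  by code_simp

lemma profile_small: "profile ! 0 = 1" "\<forall>i\<in>set [1..<6]. profile ! i = 2"
  by (simp_all add: profile_def upt_rec)

lemma G18_mult_inverse: "G18 * G18_inv = 1\<^sub>m 18" and G18_inverse_mult: "G18_inv * G18 = 1\<^sub>m 18"
  by (rule row_matrix_mult_eq_one square_kernel_rows square_inverse_rows
      kernel_inverse_rows inverse_kernel_rows)+

lemma G18_invertible: "invertible_mat G18"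
  unfolding invertible_mat_def inverts_mat_def
  using G18_mult_inverse G18_inverse_mult by (auto simp: row_matrix_def intro!: exI[of _ G18_inv])

lemma G18_kernel: "is_kernel 18 (lin_kernel G18)"
  unfolding is_kernel_def
proof (rule bij_betw_byWitness[where f'="lin_kernel G18_inv"])
  show "\<forall>a\<in>carrier_vec 18. lin_kernel G18_inv (lin_kernel G18 a) = a"
    using lin_kernel_inverse[OF row_matrix_carrier row_matrix_carrier G18_mult_inverse] by blast
  show "\<forall>a\<in>carrier_vec 18. lin_kernel G18 (lin_kernel G18_inv a) = a"
    using lin_kernel_inverse[OF row_matrix_carrier row_matrix_carrier G18_inverse_mult] by blast
qed (auto simp: dim_lin_kernel_row_matrix intro: carrier_vecI)

text \<open>The kernel is injective, so no coset contains the zero vector.\<close>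

lemma zero_notin_coset_weights_G18:
  assumes i: "i < 18"
  shows "0 \<notin> coset_weights kernel_rows i"
proof -
  have "inj_on (lin_kernel G18) (carrier_vec 18)"
    using G18_kernel by (simp add: is_kernel_def bij_betw_def)
  then have "0 \<notin> partial_dist_set 18 (lin_kernel G18) i"
    by (rule zero_notin_partial_dist_set[OF _ dim_lin_kernel_row_matrix i])
  then show ?thesis unfolding partial_dist_set_row_matrix[OF square_kernel_rows i] .
qed

lemma even_coset_weights_G18:
  assumes i: "1 \<le> i" "i < 18" and n: "n \<in> coset_weights kernel_rows i"
  shows "even n"
proof -
  have R: "length kernel_rows = 18" "\<forall>r\<in>set kernel_rows. length r = 18"
    using square_kernel_rows by (auto simp: square_rows_def)
  obtain cs where n_eq: "n = weight (lincomb (kernel_rows ! i) (drop (Suc i) kernel_rows) cs)"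
    using n by (auto simp: coset_weights_def)
  have "tl kernel_rows ! (i - 1) = kernel_rows ! i" "i - 1 < length (tl kernel_rows)"
    using i R by (simp_all add: nth_tl)
  then have row: "kernel_rows ! i \<in> set (tl kernel_rows)" by (metis nth_mem)
  have rest: "set (drop (Suc i) kernel_rows) \<subseteq> set (tl kernel_rows)"
    by (simp add: drop_Suc set_drop_subset)
  have "length (kernel_rows ! i) = 18" using R i by simp
  then show ?thesis
    unfolding n_eq using even_weight_kernel_rows row rest R(2)
    by (intro even_weight_lincomb) (auto dest: in_set_dropD)
qed

text \<open>Lower bound on the coset weights: from injectivity for \<open>i = 0\<close>, additionally from
  parity for \<open>i < 6\<close>, and from enumeration otherwise.\<close>

lemma coset_weights_G18_ge:
  assumes i: "i < 18" and n: "n \<in> coset_weights kernel_rows i"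
  shows "profile ! i \<le> n"
proof -
  have nonzero: "n \<noteq> 0" using n zero_notin_coset_weights_G18[OF i] by (cases n) auto
  consider "i = 0" | "1 \<le> i" "i < 6" | "6 \<le> i" by linarith
  then show ?thesis
  proof cases
    case 1
    then show ?thesis using nonzero profile_small by simp
  next
    case 2
    then have "even n" using i n by (intro even_coset_weights_G18)
    with nonzero have "2 \<le> n" by presburger
    then show ?thesis using 2 profile_small by simp
  next
    case 3
    obtain cs where n_eq: "n = weight (lincomb (kernel_rows ! i) (drop (Suc i) kernel_rows) cs)"
      and cs: "length cs = length kernel_rows - Suc i"
      using n by (auto simp: coset_weights_def)
    have "i \<in> set [6..<18]" using 3 i by (subst set_upt) simp
    then have "profile ! i = coset_min_weight (kernel_rows ! i) (drop (Suc i) kernel_rows)"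
      using coset_min_weight_kernel_rows by (metis (no_types, lifting))
    also have "\<dots> \<le> n"
      unfolding n_eq by (rule coset_min_weight_le) (use cs in simp)
    finally show ?thesis .
  qed
qed

lemma partial_dist_G18: "i < 18 \<Longrightarrow> partial_dist 18 (lin_kernel G18) i = profile ! i"
proof -
  assume i: "i < 18"
  have "weight (kernel_rows ! i) = profile ! i"
    using i arg_cong[OF weight_kernel_rows, of "\<lambda>xs. xs ! i"] square_kernel_rows
    by (simp add: square_rows_def)
  with weight_row_in_coset_weights[of kernel_rows i] show ?thesis
    unfolding partial_dist_Min partial_dist_set_row_matrix[OF square_kernel_rows i]
    using coset_weights_G18_ge[OF i] by (intro Min_eqI finite_coset_weights) auto
qed

text \<open>The exponent of the profile is \<open>(34 a + 2 b) / (18 (a + 2 b))\<close> with \<open>a = ln 2\<close> and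
  \<open>b = ln 3\<close>; rational bounds on \<open>b / a\<close> locate it to within \<open>5 \<cdot> 10\<^sup>-\<^sup>6\<close>.\<close>

lemma profile_ratio_close:
  fixes a b :: real
  assumes ab: "0 < a" "0 < b" and upper: "569 * a < 359 * b" and lower: "306 * b < 485 * a"
  shows "\<bar>(34 * a + 2 * b) / (18 * (a + 2 * b)) - 0.49521\<bar> < 0.000005"
proof -
  define q where "q = (34 * a + 2 * b) / (18 * (a + 2 * b))"
  have d: "0 < 18 * (a + 2 * b)" using ab by simp
  have "q < 0.495215"
    unfolding q_def using d upper by (simp add: pos_divide_less_eq)
  moreover have "0.495205 < q"
    unfolding q_def using d lower by (simp add: pos_less_divide_eq)
  ultimately show ?thesis unfolding q_def[symmetric] abs_less_iff by simp
qed

text \<open>The bounds \<open>2\<^sup>5\<^sup>6\<^sup>9 < 3\<^sup>3\<^sup>5\<^sup>9\<close> and \<open>3\<^sup>3\<^sup>0\<^sup>6 < 2\<^sup>4\<^sup>8\<^sup>5\<close> are checked by integer arithmetic.\<close>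

lemma profile_exponent:
  "\<bar>(1 / 18) * (\<Sum>i<18. log 18 (real (profile ! i))) - 0.49521\<bar> < (0.000005::real)"
proof -
  define a where "a = ln (2::real)"
  define b where "b = ln (3::real)"
  have ab: "0 < a" "0 < b" by (simp_all add: a_def b_def)
  have ln_profile: "ln (4::real) = 2 * a" "ln (8::real) = 3 * a" "ln (16::real) = 4 * a"
      "ln (6::real) = a + b" "ln (18::real) = a + 2 * b"
    using ln_realpow[of 2 2] ln_realpow[of 2 3] ln_realpow[of 2 4] ln_mult[of 2 3]
      ln_mult[of 2 9] ln_realpow[of 3 2]
    by (simp_all add: a_def b_def)
  have upper: "569 * a < 359 * b"
    using ln_less_of_power_less[of 2 569 3 359] by (simp add: a_def b_def)
  have lower: "306 * b < 485 * a"
    using ln_less_of_power_less[of 3 306 2 485] by (simp add: a_def b_def)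
  have "(1 / 18) * (\<Sum>i<18. log 18 (real (profile ! i)))
      = (1 / 18) * (5 * log 18 2 + 4 * log 18 4 + 2 * log 18 6 + 5 * log 18 8 + log 18 16)"
    by (simp add: profile_def numeral_eq_Suc)
  also have "\<dots> = (34 * a + 2 * b) / (18 * ln 18)"
    unfolding log_def ln_profile(1-4) a_def[symmetric] by (simp add: field_simps)
  finally show ?thesis
    using profile_ratio_close[OF ab upper lower] by (simp only: ln_profile(5))
qed

theorem mainTheorem18:
  shows "(\<exists>G \<in> carrier_mat 18 18. invertible_mat G \<and>
            map (partial_dist 18 (lin_kernel G)) [0..<18]
              = [1,2,2,2,2,2,4,4,4,4,6,6,8,8,8,8,8,16])
       \<and> opt_exponent 18 \<ge>
           (1 / 18) * (\<Sum>i<18. log 18 (real ([1,2,2,2,2,2,4,4,4,4,6,6,8,8,8,8,8,16::nat] ! i)))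
       \<and> \<bar>(1 / 18) * (\<Sum>i<18. log 18 (real ([1,2,2,2,2,2,4,4,4,4,6,6,8,8,8,8,8,16::nat] ! i))) - 0.49521\<bar>
           < (0.000005::real)"
proof -
  have profile_G18: "map (partial_dist 18 (lin_kernel G18)) [0..<18] = profile"
    by (rule nth_equalityI) (simp_all add: partial_dist_G18 profile_def)
  have "kernel_exponent 18 (lin_kernel G18) = (1 / 18) * (\<Sum>i<18. log 18 (real (profile ! i)))"
    by (simp add: kernel_exponent_def partial_dist_G18)
  then have opt: "(1 / 18) * (\<Sum>i<18. log 18 (real (profile ! i))) \<le> opt_exponent 18"
    using kernel_exponent_le_opt_exponent[OF G18_kernel] by simp
  show ?thesis
    unfolding profile_def[symmetric]
    by (intro conjI bexI[of _ G18] G18_invertible row_matrix_carrier profile_G18 opt profile_exponent)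
qed

end
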